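(* Let $G$ be a nontrivial finite subgroup of $\mathrm{SO}(3)$. Then there does not exist a continuous function $f:\mathrm{SO}(3)/G\to\mathrm{SO}(3)$ such that $p_G(f(\mathcal{R}))=\mathcal{R}$ for every $\mathcal{R}\in\mathrm{SO}(3)/G$.
   Context: $\mathrm{SO}(3)/G$ denotes the space of left cosets $RG$ ($R\in\mathrm{SO}(3)$) with the quotient topology, and $p_G:\mathrm{SO}(3)\to\mathrm{SO}(3)/G$, $R\mapsto RG$, is the quotient (covering) map. *)

theory Defs
  imports "HOL-Analysis.Analysis"
begin

definition SO3 :: "(real^3^3) set" where
  "SO3 = {Q. rotation_matrix Q}"

definition subgroup_SO3 :: "(real^3^3) set \<Rightarrow> bool" where
  "subgroup_SO3 G \<longleftrightarrow> G \<subseteq> SO3 \<and> mat 1 \<in> G \<and>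
     (\<forall>g\<in>G. \<forall>h\<in>G. g ** h \<in> G) \<and> (\<forall>g\<in>G. matrix_inv g \<in> G)"

definition coset_map :: "(real^3^3) set \<Rightarrow> real^3^3 \<Rightarrow> (real^3^3) set" where
  "coset_map G R = (\<lambda>g. R ** g) ` G"

definition quotient_topology :: "'a topology \<Rightarrow> ('a \<Rightarrow> 'b) \<Rightarrow> 'b topology" where
  "quotient_topology X p =
     topology (\<lambda>U. U \<subseteq> p ` topspace X \<and> openin X {x \<in> topspace X. p x \<in> U})"

end

theory Submission
  imports Defs
begin

(* A continuous section f of p_G gives a continuous map s = f o p_G on SO(3) with s R in the
   coset R G, so R \<mapsto> R\<^sup>T s R is a continuous map from SO(3) into the finite set G. SO(3) is
   connected, being a continuous image of S\<^sup>2 \<times> S\<^sup>2 (every rotation is a product of four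
   Householder reflections, two of them fixed), hence this map is constant: s R = R g.
   But s is constant on cosets, so for h \<in> G we get h g = s h = s 1 = g, i.e. h = 1. *)

lemma orthogonal_matrix_transpose_mult_fixes:
  assumes "orthogonal_matrix (R :: real^'n^'n)" "R *v x = Q *v x"
  shows "(transpose R ** Q) *v x = x"
  using assms
  by (metis matrix_vector_mul_assoc matrix_vector_mul_lid orthogonal_matrix_def)

lemma rotation_matrix_fixing_two_axes:
  fixes Q :: "real^3^3"
  assumes "rotation_matrix Q" "Q *v axis 1 1 = axis 1 1" "Q *v axis 2 1 = axis 2 1"
  shows "Q = mat 1"
proof -
  have "Q *v axis 3 1 = axis 3 1"
    using cross_rotation_matrix[OF assms(1), of "axis 1 1" "axis 2 1"] assms(2,3)
    by (simp add: cross_basis)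
  with assms(2,3) show ?thesis
    by (simp add: vec_eq_iff forall_3 matrix_vector_mult_def sum_3 axis_def mat_def)
qed

lemma rotation_matrix_mult:
  fixes R Q :: "real^'n^'n"
  shows "rotation_matrix R \<Longrightarrow> rotation_matrix Q \<Longrightarrow> rotation_matrix (R ** Q)"
  by (simp add: rotation_matrix_def orthogonal_matrix_mul det_mul)

lemma rotation_matrix_transpose: "rotation_matrix R \<Longrightarrow> rotation_matrix (transpose R)"
  by (simp add: rotation_matrix_def)

lemma orthogonal_transformation_matrix_vector_mult:
  "orthogonal_matrix (Q :: real^'n^'n) \<Longrightarrow> orthogonal_transformation ((*v) Q)"
  by (simp add: orthogonal_transformation_matrix)

definition householder :: "real^'n \<Rightarrow> real^'n^'n" where
  "householder a = mat 1 - (\<chi> i j. 2 * a$i * a$j)"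

lemma householder_mult_vector: "householder a *v x = x - (2 * (a \<bullet> x)) *\<^sub>R a"
proof -
  have "(\<chi> i j. 2 * a$i * a$j) *v x = (2 * (a \<bullet> x)) *\<^sub>R a"
    by (simp add: vec_eq_iff matrix_vector_mult_def inner_vec_def sum_distrib_left algebra_simps)
  then show ?thesis
    by (simp add: householder_def matrix_vector_mult_diff_rdistrib)
qed

lemma householder_fixes_orthogonal: "a \<bullet> x = 0 \<Longrightarrow> householder a *v x = x"
  by (simp add: householder_mult_vector)

lemma householder_sgn_diff:
  fixes x y :: "real^'n"
  assumes "norm x = norm y"
  shows "householder (sgn (x - y)) *v x = y"
proof (cases "x = y")
  case True
  then show ?thesis by (simp add: householder_mult_vector)
next
  case False
  have "x \<bullet> x = y \<bullet> y"
    using assms by (simp add: dot_square_norm)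
  then have "norm (x - y) ^ 2 = 2 * ((x - y) \<bullet> x)"
    by (simp add: power2_norm_eq_inner inner_diff_left inner_diff_right inner_commute)
  with False have "2 * ((x - y) \<bullet> x) / norm (x - y) ^ 2 = 1"
    by (metis divide_self norm_eq_zero power_eq_0_iff right_minus_eq)
  then have "(2 * (sgn (x - y) \<bullet> x)) *\<^sub>R sgn (x - y) = x - y"
    by (simp add: sgn_div_norm power2_eq_square divide_inverse mult_ac)
  then show ?thesis
    by (simp add: householder_mult_vector)
qed

lemma orthogonal_matrix_householder:
  fixes a :: "real^'n"
  assumes "norm a = 1"
  shows "orthogonal_matrix (householder a)"
proof -
  have "norm (householder a *v v) = norm v" for v
    using assms by (simp add: norm_eq householder_mult_vector algebra_simps inner_commute
        flip: norm_eq_1)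
  then have "orthogonal_transformation ((*v) (householder a))"
    by (simp add: orthogonal_transformation)
  then show ?thesis
    by (simp add: orthogonal_transformation_matrix)
qed

lemma det_householder:
  fixes a :: "real^3"
  assumes "norm a = 1"
  shows "det (householder a) = -1"
proof -
  have "a$1 * a$1 + a$2 * a$2 + a$3 * a$3 = 1"
    using assms by (simp add: norm_eq_1 inner_vec_def sum_3)
  then show ?thesis
    unfolding det_3 householder_def by (simp add: mat_def) algebra
qed

lemma rotation_matrix_householder_mult:
  fixes a b :: "real^3"
  assumes "norm a = 1" "norm b = 1"
  shows "rotation_matrix (householder a ** householder b)"
  using assms
  by (simp add: rotation_matrix_def orthogonal_matrix_mul orthogonal_matrix_householder det_mul
      det_householder)

lemma householder_pair_maps:
  fixes x y z b :: "real^'n"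
  assumes "norm x = norm y" "norm b = 1" "b \<bullet> x = 0" "b \<bullet> z = 0" "x \<bullet> z = 0" "y \<bullet> z = 0"
  obtains a where "norm a = 1" "a \<bullet> z = 0" "(householder a ** householder b) *v x = y"
proof -
  have b_fix: "householder b *v x = x"
    using assms(3) by (rule householder_fixes_orthogonal)
  show thesis
  proof (cases "x = y")
    case True
    then show thesis
      using that[of b] assms(2,4) b_fix by (simp flip: matrix_vector_mul_assoc)
  next
    case False
    show thesis
    proof (rule that)
      show "norm (sgn (x - y)) = 1"
        using False by (simp add: norm_sgn)
      show "sgn (x - y) \<bullet> z = 0"
        using assms(5,6) by (simp add: sgn_div_norm inner_diff_left)
      show "(householder (sgn (x - y)) ** householder b) *v x = y"
        using assms(1) b_fix by (simp add: householder_sgn_diff flip: matrix_vector_mul_assoc)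
    qed
  qed
qed

lemma rotation_matrix_eq_householder_product:
  fixes Q :: "real^3^3"
  assumes Q: "rotation_matrix Q"
  obtains a c where "norm a = 1" "norm c = 1"
    "Q = householder a ** householder (axis 2 1) ** (householder c ** householder (axis 3 1))"
proof -
  let ?e1 = "axis 1 1 :: real^3" and ?e2 = "axis 2 1 :: real^3" and ?e3 = "axis 3 1 :: real^3"
  have "orthogonal_transformation ((*v) Q)"
    using Q by (simp add: rotation_matrix_def orthogonal_transformation_matrix_vector_mult)
  then obtain a where a: "norm a = 1" "(householder a ** householder ?e2) *v ?e1 = Q *v ?e1"
    using householder_pair_maps[of ?e1 "Q *v ?e1" ?e2 0]
    by (auto simp: orthogonal_transformation_norm inner_axis_axis)
  define R1 where "R1 = householder a ** householder ?e2"
  define Q1 where "Q1 = transpose R1 ** Q"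
  have R1: "rotation_matrix R1"
    using a by (simp add: R1_def rotation_matrix_householder_mult)
  have Q1: "rotation_matrix Q1"
    using R1 Q by (simp add: Q1_def rotation_matrix_mult rotation_matrix_transpose)
  have Q1_e1: "Q1 *v ?e1 = ?e1"
    using R1 a
    by (simp add: Q1_def R1_def rotation_matrix_def orthogonal_matrix_transpose_mult_fixes)
  have Q1_orth: "orthogonal_transformation ((*v) Q1)"
    using Q1 by (simp add: rotation_matrix_def orthogonal_transformation_matrix_vector_mult)
  then have "(Q1 *v ?e2) \<bullet> ?e1 = ?e2 \<bullet> ?e1"
    using Q1_e1 by (metis orthogonal_transformation_def)
  then have "(Q1 *v ?e2) \<bullet> ?e1 = 0"
    by (simp add: inner_axis_axis)
  then obtain c where c: "norm c = 1" "c \<bullet> ?e1 = 0"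
    "(householder c ** householder ?e3) *v ?e2 = Q1 *v ?e2"
    using householder_pair_maps[of ?e2 "Q1 *v ?e2" ?e3 ?e1] Q1_orth
    by (auto simp: orthogonal_transformation_norm inner_axis_axis inner_commute)
  define R2 where "R2 = householder c ** householder ?e3"
  have R2: "rotation_matrix R2"
    using c by (simp add: R2_def rotation_matrix_householder_mult)
  have "R2 *v ?e1 = Q1 *v ?e1"
    using c Q1_e1
    by (simp add: R2_def householder_fixes_orthogonal inner_axis_axis inner_commute
        flip: matrix_vector_mul_assoc)
  then have "transpose R2 ** Q1 = mat 1"
    using R2 c Q1
    by (intro rotation_matrix_fixing_two_axes rotation_matrix_mult rotation_matrix_transpose)
      (simp_all add: R2_def rotation_matrix_def orthogonal_matrix_transpose_mult_fixes)
  then have "Q = R1 ** R2"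
    using R1 R2 unfolding Q1_def rotation_matrix_def orthogonal_matrix_def
    by (metis matrix_mul_assoc matrix_mul_lid matrix_mul_rid)
  with a c show thesis
    using that by (simp add: R1_def R2_def)
qed

lemma continuous_on_matrix_mult [continuous_intros]:
  fixes A :: "'a::topological_space \<Rightarrow> real^'n^'m" and B :: "'a \<Rightarrow> real^'k^'n"
  assumes "continuous_on S A" "continuous_on S B"
  shows "continuous_on S (\<lambda>x. A x ** B x)"
  unfolding matrix_matrix_mult_def
  by (intro continuous_on_vec_lambda continuous_intros assms)

lemma continuous_on_transpose [continuous_intros]:
  fixes A :: "'a::topological_space \<Rightarrow> real^'n^'m"
  assumes "continuous_on S A"
  shows "continuous_on S (\<lambda>x. transpose (A x))"
  unfolding transpose_def
  by (intro continuous_on_vec_lambda continuous_intros assms)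

lemma continuous_on_householder [continuous_intros]:
  "continuous_on S f \<Longrightarrow> continuous_on S (\<lambda>x. householder (f x))"
  unfolding householder_def
  by (intro continuous_on_vec_lambda continuous_intros)

lemma SO3_eq_householder_image:
  "SO3 = (\<lambda>(a, c). householder a ** householder (axis 2 1) ** (householder c ** householder (axis 3 1)))
           ` (sphere 0 1 \<times> sphere 0 1)"
    (is "_ = ?h ` _")
proof (rule set_eqI iffI)+
  fix Q assume "Q \<in> SO3"
  then obtain a c where "norm a = 1" "norm c = 1" "Q = ?h (a, c)"
    unfolding SO3_def by (auto elim: rotation_matrix_eq_householder_product)
  then show "Q \<in> ?h ` (sphere 0 1 \<times> sphere 0 1)"
    by force
next
  fix Q assume "Q \<in> ?h ` (sphere 0 1 \<times> sphere 0 1)"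
  then show "Q \<in> SO3"
    by (auto simp: SO3_def intro!: rotation_matrix_mult rotation_matrix_householder_mult)
qed

lemma connected_SO3: "connected SO3"
  unfolding SO3_eq_householder_image case_prod_beta
  by (intro connected_continuous_image connected_Times connected_sphere continuous_intros) simp_all

lemma openin_quotient_topology:
  "openin (quotient_topology X p) U \<longleftrightarrow>
     U \<subseteq> p ` topspace X \<and> openin X {x \<in> topspace X. p x \<in> U}"
proof -
  have preimage_Int: "{x \<in> topspace X. p x \<in> S \<inter> T} =
      {x \<in> topspace X. p x \<in> S} \<inter> {x \<in> topspace X. p x \<in> T}" for S T
    by auto
  have preimage_Union: "{x \<in> topspace X. p x \<in> \<Union>K} = (\<Union>S\<in>K. {x \<in> topspace X. p x \<in> S})" for K
    by auto
  have "istopology (\<lambda>U. U \<subseteq> p ` topspace X \<and> openin X {x \<in> topspace X. p x \<in> U})"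
    unfolding istopology_def preimage_Int preimage_Union by auto
  then show ?thesis
    by (simp add: quotient_topology_def)
qed

lemma continuous_map_quotient_topology: "continuous_map X (quotient_topology X p) p"
proof -
  have "{x \<in> topspace X. p x \<in> p ` topspace X} = topspace X"
    by auto
  then have "openin (quotient_topology X p) (p ` topspace X)"
    by (simp add: openin_quotient_topology)
  then have "p ` topspace X \<subseteq> topspace (quotient_topology X p)"
    by (rule openin_subset)
  then show ?thesis
    by (auto simp: continuous_map_def openin_quotient_topology)
qed

lemma matrix_mul_matrix_inv: "invertible A \<Longrightarrow> A ** matrix_inv A = mat 1"
  unfolding invertible_def matrix_inv_def by (rule someI2_ex) auto

lemma orthogonal_matrix_invertible: "orthogonal_matrix Q \<Longrightarrow> invertible Q"
  unfolding invertible_def orthogonal_matrix_def by blast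

lemma coset_map_subgroup_member:
  assumes "subgroup_SO3 G" "h \<in> G"
  shows "coset_map G h = G"
proof
  show "coset_map G h \<subseteq> G"
    using assms unfolding subgroup_SO3_def coset_map_def by blast
next
  have h_inv: "h ** matrix_inv h = mat 1"
    using assms by (auto simp: subgroup_SO3_def SO3_def rotation_matrix_def
        intro: matrix_mul_matrix_inv orthogonal_matrix_invertible)
  show "G \<subseteq> coset_map G h"
  proof
    fix g assume "g \<in> G"
    then have "matrix_inv h ** g \<in> G"
      using assms by (simp add: subgroup_SO3_def)
    moreover have "h ** (matrix_inv h ** g) = g"
      using h_inv by (metis matrix_mul_assoc matrix_mul_lid)
    ultimately show "g \<in> coset_map G h"
      unfolding coset_map_def by (metis image_eqI)
  qed
qed

lemma continuous_coset_selection_eq_right_translation: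
  fixes s :: "real^'n^'n \<Rightarrow> real^'n^'n"
  assumes "connected S" "continuous_on S s" "finite G"
    and "\<And>R. R \<in> S \<Longrightarrow> orthogonal_matrix R"
    and "\<And>R. R \<in> S \<Longrightarrow> s R \<in> (\<lambda>g. R ** g) ` G"
  obtains g where "\<And>R. R \<in> S \<Longrightarrow> s R = R ** g"
proof -
  define \<gamma> where "\<gamma> R = transpose R ** s R" for R
  have s_eq: "s R = R ** \<gamma> R" if "R \<in> S" for R
    using assms(4)[OF that] by (simp add: \<gamma>_def matrix_mul_assoc orthogonal_matrix_def)
  have \<gamma>_G: "\<gamma> R \<in> G" if R: "R \<in> S" for R
  proof -
    obtain g where "g \<in> G" "s R = R ** g"
      using assms(5)[OF R] by blast
    then show ?thesis
      using assms(4)[OF R] unfolding \<gamma>_def orthogonal_matrix_def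
      by (metis matrix_mul_assoc matrix_mul_lid)
  qed
  have "finite (\<gamma> ` S)"
    using \<gamma>_G assms(3) by (metis finite_subset image_subsetI)
  moreover have "connected (\<gamma> ` S)"
    unfolding \<gamma>_def using assms(1,2)
    by (intro connected_continuous_image continuous_on_matrix_mult continuous_on_transpose
        continuous_on_id)
  ultimately have "\<gamma> ` S = {} \<or> (\<exists>g. \<gamma> ` S = {g})"
    by (simp add: connected_finite_iff_sing)
  then obtain g where "\<And>R. R \<in> S \<Longrightarrow> \<gamma> R = g"
    by blast
  then show thesis
    using that s_eq by simp
qed

lemma mem_coset_map_self: "mat 1 \<in> G \<Longrightarrow> R \<in> coset_map G R"
  by (force simp: coset_map_def)

lemma continuous_coset_selection_imp_trivial:
  assumes G: "subgroup_SO3 G" "finite G"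
    and s: "continuous_on SO3 s" "s ` SO3 \<subseteq> SO3"
    and s_coset: "\<And>R. R \<in> SO3 \<Longrightarrow> s R \<in> coset_map G R"
    and s_invariant: "\<And>R R'. coset_map G R = coset_map G R' \<Longrightarrow> s R = s R'"
  shows "G = {mat 1}"
proof -
  have SO3_orthogonal: "\<And>R. R \<in> SO3 \<Longrightarrow> orthogonal_matrix R"
    by (simp add: SO3_def rotation_matrix_def)
  obtain g where g: "\<And>R. R \<in> SO3 \<Longrightarrow> s R = R ** g"
    using continuous_coset_selection_eq_right_translation[OF connected_SO3 s(1) G(2)
        SO3_orthogonal] s_coset
    unfolding coset_map_def by blast
  have G_SO3: "G \<subseteq> SO3" and one_G: "mat 1 \<in> G"
    using G(1) by (auto simp: subgroup_SO3_def)
  then have "s (mat 1) = g"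
    using g by auto
  then have g_orthogonal: "orthogonal_matrix g"
    using s(2) one_G G_SO3 SO3_orthogonal by blast
  have "h = mat 1" if h: "h \<in> G" for h
  proof -
    have "s h = s (mat 1)"
      using coset_map_subgroup_member[OF G(1)] h one_G by (intro s_invariant) simp
    moreover have "h \<in> SO3" "mat 1 \<in> SO3"
      using h one_G G_SO3 by auto
    ultimately have "h ** g = g"
      using g by (metis matrix_mul_lid)
    moreover have "h = (h ** g) ** transpose g"
      using g_orthogonal by (simp add: orthogonal_matrix_def flip: matrix_mul_assoc)
    ultimately show ?thesis
      using g_orthogonal by (simp add: orthogonal_matrix_def)
  qed
  with one_G show ?thesis
    by blast
qed

theorem theorem9:
  fixes G :: "(real^3^3) set"
  assumes "subgroup_SO3 G" and "finite G" and "G \<noteq> {mat 1}"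
  shows "\<not> (\<exists>f. continuous_map (quotient_topology (top_of_set SO3) (coset_map G))
                                (top_of_set SO3) f
             \<and> (\<forall>C \<in> coset_map G ` SO3. coset_map G (f C) = C))"
proof
  assume "\<exists>f. continuous_map (quotient_topology (top_of_set SO3) (coset_map G))
                                (top_of_set SO3) f
             \<and> (\<forall>C \<in> coset_map G ` SO3. coset_map G (f C) = C)"
  then obtain f where f_cont: "continuous_map (quotient_topology (top_of_set SO3) (coset_map G))
                                (top_of_set SO3) f"
      and f_section: "\<And>R. R \<in> SO3 \<Longrightarrow> coset_map G (f (coset_map G R)) = coset_map G R"
    by blast
  define s where "s = f \<circ> coset_map G"
  have "continuous_map (top_of_set SO3) (top_of_set SO3) s"
    unfolding s_def using continuous_map_quotient_topology f_cont by (rule continuous_map_compose)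
  moreover have "s R \<in> coset_map G R" if "R \<in> SO3" for R
    using mem_coset_map_self[of G "s R"] f_section[OF that] assms(1)
    by (simp add: s_def subgroup_SO3_def)
  ultimately have "G = {mat 1}"
    using assms(1,2) by (intro continuous_coset_selection_imp_trivial[of G s]) (auto simp: s_def)
  with assms(3) show False ..
qed

end
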